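(* Let $P$ be any school choice problem and let $G^{\mathrm{DA}(P)}$ be the envy digraph of the DA matching. A student $i \in I$ is unimprovable if and only if $i$ does not lie on any directed cycle of $G^{\mathrm{DA}(P)}$, i.e. there do not exist $k\ge 1$ and distinct students $i=i_0,i_1,\dots,i_k$ with edges $(i_0,i_1),(i_1,i_2),\dots,(i_{k-1},i_k),(i_k,i_0)$ in $G^{\mathrm{DA}(P)}$.
   Context: A school choice problem $P$ consists of a finite set of students $I$, a finite set of schools $S$ (possibly containing a null school $s_\emptyset$ of unlimited capacity), for each student $i$ a strict preference $\succ_i$ over $S$, and for each school $s$ a quota $q_s$ and a strict priority order $\triangleright_s$ over $I$. A matching $\mu:I\to S$ assigns at most $q_s$ students to each school $s$. Matching $\mu$ weakly Pareto-dominates $\nu$ if every student weakly prefers $\mu_i$ to $\nu_i$; it Pareto-dominates $\nu$ if in addition some student strictly prefers $\mu_j$ to $\nu_j$; a matching is Pareto-efficient if no matching Pareto-dominates it. $\mathrm{DA}(P)$ is the matching produced by the student-proposing deferred acceptance algorithm: in each round, every student not tentatively held applies to her most preferred school that has not yet rejected her; each school tentatively holds the highest-priority applicants (new and previously held) up to its quota and rejects the rest; the algorithm stops when a round has no new rejection. $\mathrm{DA}_i(P)$ is $i$'s assigned school. Let $\mathcal M(P)$ be the set of Pareto-efficient matchings that weakly Pareto-dominate $\mathrm{DA}(P)$. A student $i$ is unimprovable if $\mu_i=\mathrm{DA}_i(P)$ for every $\mu\in\mathcal M(P)$ (improvable otherwise). The envy digraph $G^{\mathrm{DA}(P)}$ has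 vertex set $I$ and a directed edge $(i,j)$ iff $i$ strictly prefers $\mathrm{DA}_j(P)$ to $\mathrm{DA}_i(P)$ ("$i$ envies $j$"). *)

theory Defs
  imports Main
begin

text \<open>A school choice problem. (s,t) in pref P i means: student i strictly prefers s to t.
  (i,j) in prio P s means: student i has strictly higher priority than j at school s.\<close>

record ('i, 's) problem =
  students :: "'i set"
  schools  :: "'s set"
  pref     :: "'i \<Rightarrow> ('s \<times> 's) set"
  quota    :: "'s \<Rightarrow> nat"
  prio     :: "'s \<Rightarrow> ('i \<times> 'i) set"

text \<open>A null school of unlimited capacity is modelled as a school whose
  quota is at least the number of students; the capacity condition guarantees that a
  matching (a total assignment of students to schools) exists.\<close>

definition school_choice :: "('i, 's) problem \<Rightarrow> bool" where
  "school_choice P \<longleftrightarrow>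
     finite (students P) \<and> finite (schools P) \<and>
     (\<forall>i\<in>students P. pref P i \<subseteq> schools P \<times> schools P \<and>
                      strict_linear_order_on (schools P) (pref P i)) \<and>
     (\<forall>s\<in>schools P. prio P s \<subseteq> students P \<times> students P \<and>
                     strict_linear_order_on (students P) (prio P s)) \<and>
     card (students P) \<le> (\<Sum>s\<in>schools P. quota P s)"

definition is_matching :: "('i, 's) problem \<Rightarrow> ('i \<Rightarrow> 's) \<Rightarrow> bool" where
  "is_matching P \<mu> \<longleftrightarrow>
     (\<forall>i\<in>students P. \<mu> i \<in> schools P) \<and>
     (\<forall>s\<in>schools P. card {i\<in>students P. \<mu> i = s} \<le> quota P s)"

definition weakly_prefers :: "('i, 's) problem \<Rightarrow> 'i \<Rightarrow> 's \<Rightarrow> 's \<Rightarrow> bool" where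
  "weakly_prefers P i s t \<longleftrightarrow> s = t \<or> (s, t) \<in> pref P i"

definition weakly_dominates :: "('i, 's) problem \<Rightarrow> ('i \<Rightarrow> 's) \<Rightarrow> ('i \<Rightarrow> 's) \<Rightarrow> bool" where
  "weakly_dominates P \<mu> \<nu> \<longleftrightarrow> (\<forall>i\<in>students P. weakly_prefers P i (\<mu> i) (\<nu> i))"

definition dominates :: "('i, 's) problem \<Rightarrow> ('i \<Rightarrow> 's) \<Rightarrow> ('i \<Rightarrow> 's) \<Rightarrow> bool" where
  "dominates P \<mu> \<nu> \<longleftrightarrow> weakly_dominates P \<mu> \<nu> \<and> (\<exists>j\<in>students P. (\<mu> j, \<nu> j) \<in> pref P j)"

definition pareto_efficient :: "('i, 's) problem \<Rightarrow> ('i \<Rightarrow> 's) \<Rightarrow> bool" where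
  "pareto_efficient P \<mu> \<longleftrightarrow> is_matching P \<mu> \<and> \<not> (\<exists>\<nu>. is_matching P \<nu> \<and> dominates P \<nu> \<mu>)"

text \<open>The state of DA records, for every student, the set of schools that have rejected her.\<close>

definition best :: "('i, 's) problem \<Rightarrow> 'i \<Rightarrow> 's set \<Rightarrow> 's option" where
  "best P i X = (if X = {} then None
                 else Some (THE s. s \<in> X \<and> (\<forall>t\<in>X - {s}. (s, t) \<in> pref P i)))"

text \<open>School a student applies to in the current round: her most preferred school that
  has not rejected her yet. (A student tentatively held at s applies to s again; this is
  the same as s "holding" her.)\<close>

definition applies :: "('i, 's) problem \<Rightarrow> ('i \<Rightarrow> 's set) \<Rightarrow> 'i \<Rightarrow> 's option" where
  "applies P R i = best P i (schools P - R i)"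

definition rejected :: "('i, 's) problem \<Rightarrow> ('i \<Rightarrow> 's set) \<Rightarrow> 'i \<Rightarrow> 's \<Rightarrow> bool" where
  "rejected P R i s \<longleftrightarrow> applies P R i = Some s \<and>
     \<not> card {j\<in>students P. applies P R j = Some s \<and> (j, i) \<in> prio P s} < quota P s"

definition DA_step :: "('i, 's) problem \<Rightarrow> ('i \<Rightarrow> 's set) \<Rightarrow> ('i \<Rightarrow> 's set)" where
  "DA_step P R = (\<lambda>i. R i \<union> {s. rejected P R i s})"

text \<open>The algorithm stops when a round has no new rejection, i.e. at a fixed point of
  DA_step; since every non-final round adds a rejection and there are at most
  card I * card S possible rejections, the final state is reached after at most
  that many rounds, and further rounds do not change it.\<close>

definition DA_state :: "('i, 's) problem \<Rightarrow> ('i \<Rightarrow> 's set)" where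
  "DA_state P = (DA_step P ^^ (card (students P) * card (schools P))) (\<lambda>i. {})"

definition DA :: "('i, 's) problem \<Rightarrow> 'i \<Rightarrow> 's" where
  "DA P i = the (applies P (DA_state P) i)"

definition M_set :: "('i, 's) problem \<Rightarrow> ('i \<Rightarrow> 's) set" where
  "M_set P = {\<mu>. pareto_efficient P \<mu> \<and> weakly_dominates P \<mu> (DA P)}"

definition unimprovable :: "('i, 's) problem \<Rightarrow> 'i \<Rightarrow> bool" where
  "unimprovable P i \<longleftrightarrow> (\<forall>\<mu>\<in>M_set P. \<mu> i = DA P i)"

definition envies :: "('i, 's) problem \<Rightarrow> 'i \<Rightarrow> 'i \<Rightarrow> bool" where
  "envies P i j \<longleftrightarrow> i \<in> students P \<and> j \<in> students P \<and> (DA P j, DA P i) \<in> pref P i"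

definition on_envy_cycle :: "('i, 's) problem \<Rightarrow> 'i \<Rightarrow> bool" where
  "on_envy_cycle P i \<longleftrightarrow>
     (\<exists>k::nat. \<exists>c::nat \<Rightarrow> 'i. k \<ge> 1 \<and> c 0 = i \<and> (\<forall>n\<le>k. c n \<in> students P) \<and>
        inj_on c {0..k} \<and> (\<forall>n<k. envies P (c n) (c (Suc n))) \<and> envies P (c k) i)"

end

theory Submission
  imports Defs "HOL-Combinatorics.Cycles" "HOL-Combinatorics.Orbits"
begin

text \<open>
  Students on an envy cycle can trade their DA seats along the cycle. The rotated matching
  is DA composed with a permutation of the students, so it respects the quotas; it weakly
  dominates DA and is strictly better on the cycle, and so is every Pareto-efficient matching
  dominating it.

  Conversely, let \<open>\<mu>\<close> weakly dominate DA and let \<open>J\<close> be the students it improves.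
  A school that some student of \<open>J\<close> prefers to her DA school has rejected her in DA, so it
  is full under DA; hence at every school \<open>\<mu>\<close> seats at most as many students of \<open>J\<close> as
  DA does, and since both seat all of \<open>J\<close>, exactly as many. So \<open>\<mu> = DA \<circ> \<sigma>\<close> on
  \<open>J\<close> for a permutation \<open>\<sigma>\<close> of \<open>J\<close>, every \<open>j \<in> J\<close> envies \<open>\<sigma> j\<close>, and the
  \<open>\<sigma>\<close>-orbit of an improved student is an envy cycle through her.
\<close>

definition rank :: "('a \<times> 'a) set \<Rightarrow> 'a set \<Rightarrow> 'a \<Rightarrow> nat" where
  "rank r A x = card {y \<in> A. (y, x) \<in> r}"

lemma strict_linear_order_on_subset:
  "strict_linear_order_on B r \<Longrightarrow> A \<subseteq> B \<Longrightarrow> strict_linear_order_on A r"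
  unfolding strict_linear_order_on_def total_on_def by blast

lemma bij_betw_rank:
  assumes fin: "finite A" and ord: "strict_linear_order_on A r"
  shows "bij_betw (rank r A) A {..<card A}"
proof -
  have less: "rank r A x < rank r A y" if "x \<in> A" "y \<in> A" "(x, y) \<in> r" for x y
    unfolding rank_def
    using ord that fin by (intro psubset_card_mono)
      (auto simp: strict_linear_order_on_def trans_def irrefl_def)
  have inj: "inj_on (rank r A) A"
  proof (rule inj_onI, rule ccontr)
    fix x y assume "x \<in> A" "y \<in> A" "rank r A x = rank r A y" "x \<noteq> y"
    then show False
      using ord less[of x y] less[of y x] by (auto simp: strict_linear_order_on_def total_on_def)
  qed
  have "rank r A x < card A" if "x \<in> A" for x
    unfolding rank_def
    using ord that fin
    by (intro psubset_card_mono) (auto simp: strict_linear_order_on_def irrefl_def)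
  then have "rank r A ` A \<subseteq> {..<card A}" by blast
  with inj have "rank r A ` A = {..<card A}"
    by (simp add: card_image card_subset_eq)
  with inj show ?thesis unfolding bij_betw_def by blast
qed

lemma card_rank_less:
  assumes "finite A" "strict_linear_order_on A r"
  shows "card {x \<in> A. rank r A x < q} = min q (card A)"
proof -
  have bij: "bij_betw (rank r A) A {..<card A}" by (rule bij_betw_rank[OF assms])
  have "rank r A ` {x \<in> A. rank r A x < q} = {..<card A} \<inter> {..<q}"
  proof
    show "rank r A ` {x \<in> A. rank r A x < q} \<subseteq> {..<card A} \<inter> {..<q}"
      using bij unfolding bij_betw_def by blast
    show "{..<card A} \<inter> {..<q} \<subseteq> rank r A ` {x \<in> A. rank r A x < q}"
      using bij unfolding bij_betw_def by (auto simp: image_iff)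
  qed
  also have "\<dots> = {..<min q (card A)}" by auto
  finally have img: "rank r A ` {x \<in> A. rank r A x < q} = {..<min q (card A)}" .
  have "inj_on (rank r A) {x \<in> A. rank r A x < q}"
    using bij unfolding bij_betw_def by (blast intro: inj_on_subset)
  from card_image[OF this] img show ?thesis by simp
qed

lemma strict_linear_order_on_obtains_least:
  assumes fin: "finite A" and "A \<noteq> {}" and ord: "strict_linear_order_on A r"
  obtains s where "s \<in> A" "\<forall>t \<in> A - {s}. (s, t) \<in> r"
proof -
  have "0 \<in> {..<card A}" using assms by auto
  then obtain s where s: "s \<in> A" "rank r A s = 0"
    using bij_betw_rank[OF fin ord] unfolding bij_betw_def by (metis imageE)
  then have "{y \<in> A. (y, s) \<in> r} = {}" using fin by (simp add: rank_def)
  then have "\<forall>t \<in> A - {s}. (s, t) \<in> r"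
    using ord s(1) by (auto simp: strict_linear_order_on_def total_on_def)
  with s(1) show thesis by (rule that)
qed

lemma permutes_matching_fibers:
  assumes fin: "finite J" and fibers: "\<And>s. card {x \<in> J. f x = s} = card {x \<in> J. g x = s}"
  obtains \<sigma> where "\<sigma> permutes J" "\<And>x. x \<in> J \<Longrightarrow> g (\<sigma> x) = f x"
proof -
  have "\<forall>s. \<exists>h. bij_betw h {x \<in> J. f x = s} {x \<in> J. g x = s}"
    using fin fibers by (intro allI finite_same_card_bij) auto
  then have "\<exists>h. \<forall>s. bij_betw (h s) {x \<in> J. f x = s} {x \<in> J. g x = s}"
    by (rule choice)
  then obtain h where h: "\<And>s. bij_betw (h s) {x \<in> J. f x = s} {x \<in> J. g x = s}"
    by blast
  define \<sigma> where "\<sigma> x = (if x \<in> J then h (f x) x else x)" for x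
  have maps: "\<sigma> x \<in> J \<and> g (\<sigma> x) = f x" if "x \<in> J" for x
    using h[of "f x"] that unfolding \<sigma>_def bij_betw_def by auto
  have "inj_on \<sigma> J"
  proof (rule inj_onI)
    fix x y assume "x \<in> J" "y \<in> J" "\<sigma> x = \<sigma> y"
    moreover from this have "f x = f y" using maps by metis
    ultimately show "x = y"
      using h[of "f x"] unfolding \<sigma>_def bij_betw_def by (auto dest: inj_onD)
  qed
  with fin maps have "bij_betw \<sigma> J J"
    by (simp add: bij_betw_def endo_inj_surj image_subset_iff)
  then have "\<sigma> permutes J" by (rule bij_imp_permutes) (simp add: \<sigma>_def)
  with maps show thesis by (intro that) auto
qed

lemma cycle_of_list_nth:
  assumes "distinct cs" "n < length cs"
  shows "cycle_of_list cs (cs ! n) = cs ! (Suc n mod length cs)"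
  using arg_cong[OF cyclic_rotation[OF assms(1), of 1], of "\<lambda>xs. xs ! n"] assms(2)
  by (simp add: nth_rotate1)

lemma permutation_orbit:
  assumes "permutation \<sigma>" "\<sigma> x \<noteq> x"
  obtains k where "1 \<le> k" "(\<sigma> ^^ Suc k) x = x" "inj_on (\<lambda>n. (\<sigma> ^^ n) x) {0..k}"
proof -
  define k where "k = funpow_dist \<sigma> (\<sigma> x) x"
  have orb: "x \<in> orbit \<sigma> x" by (rule permutation_self_in_orbit[OF assms(1)])
  have ret: "(\<sigma> ^^ Suc k) x = x" using funpow_dist1_prop[OF orb] unfolding k_def .
  with assms(2) have "1 \<le> k" by (cases k) auto
  moreover have "inj_on (\<lambda>n. (\<sigma> ^^ n) x) {0..k}"
    using inj_on_funpow_dist1[OF orb] unfolding k_def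
    by (simp add: atLeastLessThanSuc_atLeastAtMost)
  ultimately show thesis using ret that by blast
qed

lemma sum_card_fibers:
  assumes "finite S" "finite T" "g ` S \<subseteq> T"
  shows "(\<Sum>y \<in> T. card {x \<in> S. g x = y}) = card S"
proof -
  have "(\<Sum>y \<in> T. card {x \<in> S. g x = y}) = card (\<Union>y \<in> T. {x \<in> S. g x = y})"
    using assms by (intro card_UN_disjoint[symmetric]) auto
  also have "(\<Union>y \<in> T. {x \<in> S. g x = y}) = S" using assms(3) by blast
  finally show ?thesis .
qed

locale school_choice_problem =
  fixes P :: "('i, 's) problem"
  assumes school_choice: "school_choice P"
begin

lemma finite_students: "finite (students P)"
  and finite_schools: "finite (schools P)"
  and capacity: "card (students P) \<le> (\<Sum>s\<in>schools P. quota P s)"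
  using school_choice unfolding school_choice_def by auto

lemma pref_order: "j \<in> students P \<Longrightarrow> strict_linear_order_on (schools P) (pref P j)"
  and pref_schools: "j \<in> students P \<Longrightarrow> pref P j \<subseteq> schools P \<times> schools P"
  and prio_order: "s \<in> schools P \<Longrightarrow> strict_linear_order_on (students P) (prio P s)"
  using school_choice unfolding school_choice_def by auto

lemma pref_irrefl: "j \<in> students P \<Longrightarrow> (s, s) \<notin> pref P j"
  using pref_order unfolding strict_linear_order_on_def irrefl_def by blast

lemma pref_trans: "j \<in> students P \<Longrightarrow> (a, b) \<in> pref P j \<Longrightarrow> (b, c) \<in> pref P j \<Longrightarrow> (a, c) \<in> pref P j"
  using pref_order unfolding strict_linear_order_on_def trans_def by blast

lemma pref_asym: "j \<in> students P \<Longrightarrow> (a, b) \<in> pref P j \<Longrightarrow> (b, a) \<notin> pref P j"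
  using pref_irrefl pref_trans by blast

lemma best_eq_SomeI:
  assumes j: "j \<in> students P" and X: "X \<subseteq> schools P" "X \<noteq> {}"
  obtains s where "best P j X = Some s" "s \<in> X" "\<forall>t \<in> X - {s}. (s, t) \<in> pref P j"
proof -
  have ord: "strict_linear_order_on X (pref P j)"
    using pref_order[OF j] X(1) by (rule strict_linear_order_on_subset)
  obtain s where s: "s \<in> X" "\<forall>t \<in> X - {s}. (s, t) \<in> pref P j"
    using strict_linear_order_on_obtains_least[OF finite_subset[OF X(1) finite_schools] X(2) ord] .
  have "(THE s. s \<in> X \<and> (\<forall>t \<in> X - {s}. (s, t) \<in> pref P j)) = s"
    using s pref_asym[OF j] by (intro the_equality) blast+
  with X(2) have "best P j X = Some s" unfolding best_def by simp
  with s show thesis by (intro that)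
qed

lemma applies_SomeD:
  assumes "j \<in> students P" "applies P R j = Some s"
  shows "s \<in> schools P - R j" "\<forall>t \<in> schools P - R j - {s}. (s, t) \<in> pref P j"
proof -
  have "schools P - R j \<noteq> {}"
    using assms(2) unfolding applies_def best_def by (auto split: if_splits)
  then obtain s' where s': "applies P R j = Some s'" "s' \<in> schools P - R j"
      "\<forall>t \<in> schools P - R j - {s'}. (s', t) \<in> pref P j"
    using best_eq_SomeI[OF assms(1)] unfolding applies_def by blast
  from s'(1) assms(2) have "s' = s" by simp
  with s'(2,3) show "s \<in> schools P - R j" "\<forall>t \<in> schools P - R j - {s}. (s, t) \<in> pref P j"
    by simp_all
qed

lemma applies_eq_None_iff: "applies P R j = None \<longleftrightarrow> schools P \<subseteq> R j"
  unfolding applies_def best_def by auto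

definition applicants :: "('i \<Rightarrow> 's set) \<Rightarrow> 's \<Rightarrow> 'i set" where
  "applicants R s = {j \<in> students P. applies P R j = Some s}"

lemma finite_applicants: "finite (applicants R s)"
  using finite_students unfolding applicants_def by simp

lemma applicants_order:
  "s \<in> schools P \<Longrightarrow> strict_linear_order_on (applicants R s) (prio P s)"
  using prio_order by (rule strict_linear_order_on_subset) (auto simp: applicants_def)

lemma rejected_iff_rank:
  assumes "j \<in> students P"
  shows "rejected P R j s \<longleftrightarrow>
    j \<in> applicants R s \<and> quota P s \<le> rank (prio P s) (applicants R s) j"
proof -
  have "{k \<in> students P. applies P R k = Some s \<and> (k, j) \<in> prio P s} =
        {k \<in> applicants R s. (k, j) \<in> prio P s}"
    unfolding applicants_def by blast
  with assms show ?thesis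
    unfolding rejected_def rank_def applicants_def by auto
qed

lemma rejectedD: "j \<in> students P \<Longrightarrow> rejected P R j s \<Longrightarrow> s \<in> schools P - R j"
  using applies_SomeD(1) unfolding rejected_def by blast

text \<open>Once a school has rejected a student it stays full; together with the capacity
  condition this guarantees that no student is ever rejected by every school.\<close>

definition DA_invariant :: "('i \<Rightarrow> 's set) \<Rightarrow> bool" where
  "DA_invariant R \<longleftrightarrow> (\<forall>j \<in> students P. R j \<subseteq> schools P) \<and>
     (\<forall>s \<in> schools P. (\<exists>j \<in> students P. s \<in> R j) \<longrightarrow> quota P s \<le> card (applicants R s))"

lemma DA_invariant_applies:
  assumes inv: "DA_invariant R" and j: "j \<in> students P"
  shows "applies P R j \<noteq> None"
proof
  assume none: "applies P R j = None"
  then have full: "quota P s \<le> card (applicants R s)" if "s \<in> schools P" for s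
    using inv j that applies_eq_None_iff unfolding DA_invariant_def by blast
  have "card (students P) \<le> (\<Sum>s\<in>schools P. quota P s)" by (rule capacity)
  also have "\<dots> \<le> (\<Sum>s\<in>schools P. card (applicants R s))" using full by (rule sum_mono)
  also have "\<dots> = card (\<Union>s\<in>schools P. applicants R s)"
    using finite_schools finite_applicants
    by (intro card_UN_disjoint[symmetric]) (auto simp: applicants_def)
  also have "\<dots> \<le> card (students P - {j})"
    using finite_students none by (intro card_mono) (auto simp: applicants_def)
  also have "\<dots> < card (students P)" using finite_students j by (rule card_Diff1_less)
  finally show False by simp
qed

lemma applies_DA_step_unrejected:
  assumes "\<forall>t. \<not> rejected P R j t"
  shows "applies P (DA_step P R) j = applies P R j"
proof -
  have "DA_step P R j = R j" using assms unfolding DA_step_def by auto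
  then show ?thesis unfolding applies_def by simp
qed

lemma held_applicants_subset:
  "applicants R s - {j. rejected P R j s} \<subseteq> applicants (DA_step P R) s"
proof
  fix j assume j: "j \<in> applicants R s - {j. rejected P R j s}"
  then have "\<forall>t. \<not> rejected P R j t" unfolding applicants_def rejected_def by auto
  then show "j \<in> applicants (DA_step P R) s"
    using j applies_DA_step_unrejected unfolding applicants_def by auto
qed

lemma card_held_applicants:
  assumes s: "s \<in> schools P"
  shows "card (applicants R s - {j. rejected P R j s}) = min (quota P s) (card (applicants R s))"
proof -
  let ?rk = "rank (prio P s) (applicants R s)"
  have "\<not> rejected P R j s \<longleftrightarrow> ?rk j < quota P s" if "j \<in> applicants R s" for j
    using that rejected_iff_rank[of j R s] by (auto simp: applicants_def)
  then have "applicants R s - {j. rejected P R j s} = {j \<in> applicants R s. ?rk j < quota P s}"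
    by blast
  then show ?thesis using card_rank_less[OF finite_applicants applicants_order[OF s]] by simp
qed

lemma DA_invariant_DA_step:
  assumes inv: "DA_invariant R"
  shows "DA_invariant (DA_step P R)"
  unfolding DA_invariant_def
proof (intro conjI ballI impI)
  fix j assume "j \<in> students P"
  then show "DA_step P R j \<subseteq> schools P"
    using inv rejectedD unfolding DA_invariant_def DA_step_def by blast
next
  fix s assume s: "s \<in> schools P" and "\<exists>j \<in> students P. s \<in> DA_step P R j"
  then obtain j where j: "j \<in> students P" "s \<in> DA_step P R j" by blast
  have "quota P s \<le> card (applicants R s)"
  proof (cases "s \<in> R j")
    case True
    then show ?thesis using inv s j(1) unfolding DA_invariant_def by blast
  next
    case False
    with j have "j \<in> applicants R s" "quota P s \<le> rank (prio P s) (applicants R s) j"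
      using rejected_iff_rank unfolding DA_step_def by auto
    moreover have "rank (prio P s) (applicants R s) j < card (applicants R s)"
      using bij_betw_rank[OF finite_applicants applicants_order[OF s]] \<open>j \<in> applicants R s\<close>
      unfolding bij_betw_def by blast
    ultimately show ?thesis by simp
  qed
  then have "quota P s = card (applicants R s - {j. rejected P R j s})"
    using card_held_applicants[OF s] by simp
  also have "\<dots> \<le> card (applicants (DA_step P R) s)"
    using held_applicants_subset by (intro card_mono finite_applicants)
  finally show "quota P s \<le> card (applicants (DA_step P R) s)" .
qed

definition DA_stable :: "('i \<Rightarrow> 's set) \<Rightarrow> bool" where
  "DA_stable R \<longleftrightarrow> (\<forall>j \<in> students P. \<forall>s. \<not> rejected P R j s)"

definition rejections :: "('i \<Rightarrow> 's set) \<Rightarrow> nat" where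
  "rejections R = (\<Sum>j \<in> students P. card (R j))"

lemma rejected_cong:
  assumes "\<And>k. k \<in> students P \<Longrightarrow> R k = R' k" and "j \<in> students P"
  shows "rejected P R j s \<longleftrightarrow> rejected P R' j s"
proof -
  have applies: "applies P R k = applies P R' k" if "k \<in> students P" for k
    using assms(1) that unfolding applies_def by simp
  then have "{k \<in> students P. applies P R k = Some s \<and> (k, j) \<in> prio P s} =
             {k \<in> students P. applies P R' k = Some s \<and> (k, j) \<in> prio P s}"
    by auto
  then show ?thesis unfolding rejected_def using applies[OF assms(2)] by simp
qed

lemma DA_stable_DA_step: "DA_stable R \<Longrightarrow> DA_stable (DA_step P R)"
proof -
  assume stable: "DA_stable R"
  then have "DA_step P R j = R j" if "j \<in> students P" for j
    using that unfolding DA_stable_def DA_step_def by auto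
  then show ?thesis
    using stable rejected_cong[of R "DA_step P R"] unfolding DA_stable_def by simp
qed

lemma rejections_DA_step_less:
  assumes inv: "DA_invariant R" and unstable: "\<not> DA_stable R"
  shows "rejections R < rejections (DA_step P R)"
  unfolding rejections_def
proof (rule sum_strict_mono_ex1[OF finite_students])
  have finite_next: "finite (DA_step P R j)" if "j \<in> students P" for j
    using DA_invariant_DA_step[OF inv] that finite_schools
    unfolding DA_invariant_def by (meson finite_subset)
  have grows: "R j \<subseteq> DA_step P R j" for j unfolding DA_step_def by blast
  show "\<forall>j \<in> students P. card (R j) \<le> card (DA_step P R j)"
    using finite_next grows by (blast intro: card_mono)
  obtain j s where j: "j \<in> students P" and rej: "rejected P R j s"
    using unstable unfolding DA_stable_def by blast
  then have "R j \<subset> DA_step P R j"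
    using rejectedD[OF j rej] grows unfolding DA_step_def by blast
  with j finite_next show "\<exists>j \<in> students P. card (R j) < card (DA_step P R j)"
    by (blast intro: psubset_card_mono)
qed

lemma rejections_less:
  assumes inv: "DA_invariant R" and "students P \<noteq> {}"
  shows "rejections R < card (students P) * card (schools P)"
proof -
  have "card (R j) < card (schools P)" if j: "j \<in> students P" for j
  proof (rule psubset_card_mono[OF finite_schools])
    have "R j \<subseteq> schools P" using inv j unfolding DA_invariant_def by blast
    moreover have "\<not> schools P \<subseteq> R j"
      using DA_invariant_applies[OF inv j] by (simp add: applies_eq_None_iff)
    ultimately show "R j \<subset> schools P" by blast
  qed
  then have "rejections R < (\<Sum>j \<in> students P. card (schools P))"
    unfolding rejections_def by (rule sum_strict_mono[OF finite_students assms(2)])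
  then show ?thesis by simp
qed

lemma DA_iterate:
  "DA_invariant ((DA_step P ^^ n) (\<lambda>_. {})) \<and>
   (DA_stable ((DA_step P ^^ n) (\<lambda>_. {})) \<or> n \<le> rejections ((DA_step P ^^ n) (\<lambda>_. {})))"
proof (induction n)
  case 0
  then show ?case unfolding DA_invariant_def by simp
next
  case (Suc n)
  define R where "R = (DA_step P ^^ n) (\<lambda>_. {})"
  have inv: "DA_invariant R" and "DA_stable R \<or> n \<le> rejections R"
    using Suc unfolding R_def by auto
  then have "DA_stable (DA_step P R) \<or> Suc n \<le> rejections (DA_step P R)"
    using DA_stable_DA_step rejections_DA_step_less[OF inv] by fastforce
  with DA_invariant_DA_step[OF inv] show ?case unfolding R_def by simp
qed

lemma DA_state_invariant: "DA_invariant (DA_state P)"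
  and DA_state_stable: "DA_stable (DA_state P)"
proof -
  let ?N = "card (students P) * card (schools P)"
  have iter: "DA_invariant (DA_state P)" "DA_stable (DA_state P) \<or> ?N \<le> rejections (DA_state P)"
    using DA_iterate[of ?N] unfolding DA_state_def by auto
  then show "DA_invariant (DA_state P)" by simp
  show "DA_stable (DA_state P)"
  proof (cases "students P = {}")
    case True
    then show ?thesis unfolding DA_stable_def by simp
  next
    case False
    with iter show ?thesis using rejections_less by fastforce
  qed
qed

lemma applies_DA_state: "j \<in> students P \<Longrightarrow> applies P (DA_state P) j = Some (DA P j)"
  using DA_invariant_applies[OF DA_state_invariant] unfolding DA_def by auto

lemma applicants_DA_state: "applicants (DA_state P) s = {j \<in> students P. DA P j = s}"
  using applies_DA_state unfolding applicants_def by auto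

lemma DA_is_matching: "is_matching P (DA P)"
  unfolding is_matching_def
proof (intro conjI ballI)
  fix j assume "j \<in> students P"
  then show "DA P j \<in> schools P" using applies_DA_state applies_SomeD(1) by blast
next
  fix s assume s: "s \<in> schools P"
  let ?A = "applicants (DA_state P) s"
  have "?A - {j. rejected P (DA_state P) j s} = ?A"
    using DA_state_stable unfolding DA_stable_def applicants_def by blast
  then have "card ?A = min (quota P s) (card ?A)"
    using card_held_applicants[OF s, of "DA_state P"] by simp
  then show "card {j \<in> students P. DA P j = s} \<le> quota P s"
    unfolding applicants_DA_state by linarith
qed

lemma DA_school_full_if_preferred:
  assumes j: "j \<in> students P" and pref: "(s, DA P j) \<in> pref P j"
  shows "quota P s \<le> card {k \<in> students P. DA P k = s}"
proof -
  have s: "s \<in> schools P" using pref_schools[OF j] pref by blast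
  have "s \<in> DA_state P j"
  proof (rule ccontr)
    assume "s \<notin> DA_state P j"
    moreover have "s \<noteq> DA P j" using pref pref_irrefl[OF j] by metis
    ultimately have "(DA P j, s) \<in> pref P j"
      using applies_SomeD(2)[OF j applies_DA_state[OF j]] s by blast
    with pref_asym[OF j pref] show False by simp
  qed
  then show ?thesis
    using DA_state_invariant s j unfolding DA_invariant_def applicants_DA_state by blast
qed

lemma weakly_prefers_trans:
  "j \<in> students P \<Longrightarrow> weakly_prefers P j a b \<Longrightarrow> weakly_prefers P j b c \<Longrightarrow> weakly_prefers P j a c"
  unfolding weakly_prefers_def using pref_trans by blast

lemma weakly_prefers_strict_trans:
  "j \<in> students P \<Longrightarrow> weakly_prefers P j a b \<Longrightarrow> (b, c) \<in> pref P j \<Longrightarrow> (a, c) \<in> pref P j"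
  unfolding weakly_prefers_def using pref_trans by blast

lemma weakly_dominates_trans:
  "weakly_dominates P \<mu> \<nu> \<Longrightarrow> weakly_dominates P \<nu> \<rho> \<Longrightarrow> weakly_dominates P \<mu> \<rho>"
  unfolding weakly_dominates_def using weakly_prefers_trans by blast

definition welfare :: "('i \<Rightarrow> 's) \<Rightarrow> nat" where
  "welfare \<mu> = (\<Sum>j \<in> students P. card {t \<in> schools P. (\<mu> j, t) \<in> pref P j})"

lemma welfare_le: "welfare \<mu> \<le> card (students P) * card (schools P)"
proof -
  have "welfare \<mu> \<le> (\<Sum>j \<in> students P. card (schools P))"
    unfolding welfare_def using finite_schools by (intro sum_mono card_mono) auto
  then show ?thesis by simp
qed

lemma welfare_less_if_dominates:
  assumes "dominates P \<nu> \<mu>"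
  shows "welfare \<mu> < welfare \<nu>"
  unfolding welfare_def
proof (rule sum_strict_mono_ex1[OF finite_students])
  let ?below = "\<lambda>\<mu> j. {t \<in> schools P. (\<mu> j, t) \<in> pref P j}"
  have weak: "weakly_prefers P j (\<nu> j) (\<mu> j)" if "j \<in> students P" for j
    using assms that unfolding dominates_def weakly_dominates_def by blast
  then have subset: "?below \<mu> j \<subseteq> ?below \<nu> j" if "j \<in> students P" for j
    using that weakly_prefers_strict_trans by blast
  then show "\<forall>j \<in> students P. card (?below \<mu> j) \<le> card (?below \<nu> j)"
    using finite_schools by (simp add: card_mono)
  obtain j where j: "j \<in> students P" and strict: "(\<nu> j, \<mu> j) \<in> pref P j"
    using assms unfolding dominates_def by blast
  then have "\<mu> j \<in> ?below \<nu> j - ?below \<mu> j"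
    using pref_schools pref_irrefl by blast
  with subset[OF j] have "?below \<mu> j \<subset> ?below \<nu> j" by blast
  then have "card (?below \<mu> j) < card (?below \<nu> j)"
    by (rule psubset_card_mono[rotated]) (simp add: finite_schools)
  with j show "\<exists>j \<in> students P. card (?below \<mu> j) < card (?below \<nu> j)" by blast
qed

lemma pareto_efficient_weakly_dominating:
  assumes "is_matching P \<mu>"
  obtains \<nu> where "pareto_efficient P \<nu>" "weakly_dominates P \<nu> \<mu>"
proof -
  let ?improves = "\<lambda>\<nu>. is_matching P \<nu> \<and> weakly_dominates P \<nu> \<mu>"
  have "?improves \<mu>"
    using assms unfolding weakly_dominates_def weakly_prefers_def by simp
  moreover have "\<forall>\<nu>. ?improves \<nu> \<longrightarrow> welfare \<nu> < Suc (card (students P) * card (schools P))"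
    using welfare_le le_imp_less_Suc by blast
  ultimately obtain \<nu> where \<nu>: "?improves \<nu>" and max: "\<forall>\<nu>'. ?improves \<nu>' \<longrightarrow> welfare \<nu>' \<le> welfare \<nu>"
    using Lattices_Big.ex_has_greatest_nat[of ?improves \<mu> welfare] by blast
  have "pareto_efficient P \<nu>"
    unfolding pareto_efficient_def
  proof (intro conjI notI)
    show "is_matching P \<nu>" using \<nu> by simp
    assume "\<exists>\<nu>'. is_matching P \<nu>' \<and> dominates P \<nu>' \<nu>"
    then obtain \<nu>' where "is_matching P \<nu>'" "dominates P \<nu>' \<nu>" by blast
    moreover from this have "?improves \<nu>'"
      using \<nu> weakly_dominates_trans unfolding dominates_def by blast
    ultimately show False using max welfare_less_if_dominates by (meson not_le)
  qed
  with \<nu> show thesis by (intro that) auto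
qed

lemma envies_irrefl: "\<not> envies P j j"
  unfolding envies_def using pref_irrefl by blast

lemma is_matching_comp_permutes:
  assumes \<sigma>: "\<sigma> permutes students P" and \<mu>: "is_matching P \<mu>"
  shows "is_matching P (\<mu> \<circ> \<sigma>)"
  unfolding is_matching_def
proof (intro conjI ballI)
  fix j assume "j \<in> students P"
  then show "(\<mu> \<circ> \<sigma>) j \<in> schools P"
    using \<mu> permutes_in_image[OF \<sigma>] unfolding is_matching_def by simp
next
  fix s assume s: "s \<in> schools P"
  have "\<sigma> ` {j \<in> students P. (\<mu> \<circ> \<sigma>) j = s} = {k \<in> students P. \<mu> k = s}"
  proof (intro equalityI subsetI)
    fix k assume "k \<in> \<sigma> ` {j \<in> students P. (\<mu> \<circ> \<sigma>) j = s}"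
    then obtain j where "j \<in> students P" "\<mu> (\<sigma> j) = s" "k = \<sigma> j" by auto
    then show "k \<in> {k \<in> students P. \<mu> k = s}" using permutes_in_image[OF \<sigma>] by simp
  next
    fix k assume k: "k \<in> {k \<in> students P. \<mu> k = s}"
    have k_eq: "\<sigma> (inv \<sigma> k) = k" by (rule permutes_inverses(1)[OF \<sigma>])
    moreover have "inv \<sigma> k \<in> {j \<in> students P. (\<mu> \<circ> \<sigma>) j = s}"
      using k k_eq permutes_in_image[OF permutes_inv[OF \<sigma>]] by simp
    ultimately show "k \<in> \<sigma> ` {j \<in> students P. (\<mu> \<circ> \<sigma>) j = s}" by (rule image_eqI[OF sym])
  qed
  moreover have "inj_on \<sigma> {j \<in> students P. (\<mu> \<circ> \<sigma>) j = s}"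
    using permutes_inj_on[OF \<sigma>] by (rule inj_on_subset) blast
  ultimately have "card {j \<in> students P. (\<mu> \<circ> \<sigma>) j = s} = card {k \<in> students P. \<mu> k = s}"
    using card_image by fastforce
  with \<mu> s show "card {j \<in> students P. (\<mu> \<circ> \<sigma>) j = s} \<le> quota P s"
    unfolding is_matching_def by simp
qed

lemma envy_permutation_of_cycle:
  assumes "on_envy_cycle P i"
  obtains J \<sigma> where "finite J" "i \<in> J" "\<sigma> permutes J" "\<And>j. j \<in> J \<Longrightarrow> envies P j (\<sigma> j)"
proof -
  obtain k c where c0: "c 0 = i" and inj: "inj_on c {0..k}"
    and edges: "\<forall>n<k. envies P (c n) (c (Suc n))" and closing: "envies P (c k) i"
    using assms unfolding on_envy_cycle_def by blast
  define cs where "cs = map c [0..<Suc k]"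
  have distinct: "distinct cs"
    unfolding cs_def distinct_map using inj
    by (simp del: upt_Suc add: atLeastLessThanSuc_atLeastAtMost)
  have length: "length cs = Suc k" unfolding cs_def by simp
  have nth: "cs ! m = c m" if "m < Suc k" for m
    unfolding cs_def using that by (simp only: nth_map_upt) simp
  have "envies P j (cycle_of_list cs j)" if j: "j \<in> set cs" for j
  proof -
    obtain n where "n < length cs" "cs ! n = j"
      using j[unfolded in_set_conv_nth] by blast
    then have n: "n < Suc k" "j = c n" using nth length by auto
    then have successor: "cycle_of_list cs j = c (Suc n mod Suc k)"
      using cycle_of_list_nth[OF distinct, of n] nth length by simp
    consider "n < k" | "n = k" using n(1) by linarith
    then show ?thesis using n successor edges closing c0 by cases auto
  qed
  moreover have "i \<in> set cs" using nth_mem[of 0 cs] nth[of 0] length c0 by simp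
  ultimately show thesis using cycle_permutes by (intro that) auto
qed

lemma on_envy_cycle_of_permutation:
  assumes fin: "finite J" and i: "i \<in> J" and \<sigma>: "\<sigma> permutes J"
    and envy: "\<And>j. j \<in> J \<Longrightarrow> envies P j (\<sigma> j)"
  shows "on_envy_cycle P i"
proof -
  have "\<sigma> i \<noteq> i" using envy[OF i] envies_irrefl by metis
  then obtain k where k: "1 \<le> k" "(\<sigma> ^^ Suc k) i = i" and inj: "inj_on (\<lambda>n. (\<sigma> ^^ n) i) {0..k}"
    using permutation_orbit[OF permutes_imp_permutation[OF fin \<sigma>]] by blast
  have in_J: "(\<sigma> ^^ n) i \<in> J" for n
    using permutes_in_image[OF permutes_funpow[OF \<sigma>]] i by blast
  have step: "envies P ((\<sigma> ^^ n) i) ((\<sigma> ^^ Suc n) i)" for n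
    using envy[OF in_J] by simp
  have "(\<sigma> ^^ n) i \<in> students P" for n
    using step[of n] unfolding envies_def by blast
  with k inj step show ?thesis
    unfolding on_envy_cycle_def by (intro exI[of _ k] exI[of _ "\<lambda>n. (\<sigma> ^^ n) i"]) (metis funpow_0)
qed

lemma not_unimprovable_if_envy_permutation:
  assumes fin: "finite J" and i: "i \<in> J" and \<sigma>: "\<sigma> permutes J"
    and envy: "\<And>j. j \<in> J \<Longrightarrow> envies P j (\<sigma> j)"
  shows "\<not> unimprovable P i"
proof -
  have J: "J \<subseteq> students P" using envy unfolding envies_def by blast
  have improves: "(DA P (\<sigma> j), DA P j) \<in> pref P j" if "j \<in> J" for j
    using envy[OF that] unfolding envies_def by blast
  have "is_matching P (DA P \<circ> \<sigma>)"
    using permutes_subset[OF \<sigma> J] DA_is_matching by (rule is_matching_comp_permutes)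
  then obtain \<nu> where \<nu>: "pareto_efficient P \<nu>" "weakly_dominates P \<nu> (DA P \<circ> \<sigma>)"
    by (rule pareto_efficient_weakly_dominating)
  have "weakly_dominates P (DA P \<circ> \<sigma>) (DA P)"
    using improves permutes_not_in[OF \<sigma>]
    unfolding weakly_dominates_def weakly_prefers_def by (metis comp_apply)
  with \<nu> have "\<nu> \<in> M_set P" unfolding M_set_def using weakly_dominates_trans by blast
  moreover have "(\<nu> i, DA P i) \<in> pref P i"
    using \<nu>(2) i J improves[OF i] weakly_prefers_strict_trans
    unfolding weakly_dominates_def by (metis comp_apply subsetD)
  ultimately show ?thesis
    unfolding unimprovable_def using pref_irrefl i J by (metis subsetD)
qed

lemma improved_fiber_card_le:
  assumes \<mu>: "is_matching P \<mu>" and dom: "weakly_dominates P \<mu> (DA P)" and s: "s \<in> schools P"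
  defines "J \<equiv> {j \<in> students P. \<mu> j \<noteq> DA P j}"
  shows "card {j \<in> J. \<mu> j = s} \<le> card {j \<in> J. DA P j = s}"
proof (cases "\<exists>j \<in> J. \<mu> j = s")
  case False
  then have none: "{j \<in> J. \<mu> j = s} = {}" by blast
  show ?thesis unfolding none by simp
next
  case True
  then obtain j where "j \<in> J" "\<mu> j = s" by blast
  then have "j \<in> students P" "(s, DA P j) \<in> pref P j"
    using dom unfolding J_def weakly_dominates_def weakly_prefers_def by auto
  then have full: "quota P s \<le> card {k \<in> students P. DA P k = s}"
    by (rule DA_school_full_if_preferred)
  have finite_J: "finite J" using finite_students unfolding J_def by simp
  have split: "card {k \<in> students P. f k = s} =
      card {k \<in> J. f k = s} + card {k \<in> students P - J. f k = s}"
    for f :: "'i \<Rightarrow> 's"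
  proof -
    have "{k \<in> students P. f k = s} = {k \<in> J. f k = s} \<union> {k \<in> students P - J. f k = s}"
      unfolding J_def by blast
    moreover have "card ({k \<in> J. f k = s} \<union> {k \<in> students P - J. f k = s}) =
        card {k \<in> J. f k = s} + card {k \<in> students P - J. f k = s}"
      using finite_J finite_students by (intro card_Un_disjoint) auto
    ultimately show ?thesis by simp
  qed
  have unchanged: "{k \<in> students P - J. \<mu> k = s} = {k \<in> students P - J. DA P k = s}"
    unfolding J_def by auto
  have "card {k \<in> students P. \<mu> k = s} \<le> quota P s"
    using \<mu> s unfolding is_matching_def by blast
  with full split[of \<mu>, unfolded unchanged] split[of "DA P"] show ?thesis by linarith
qed

lemma improved_fiber_card_eq:
  assumes \<mu>: "is_matching P \<mu>" and dom: "weakly_dominates P \<mu> (DA P)"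
  defines "J \<equiv> {j \<in> students P. \<mu> j \<noteq> DA P j}"
  shows "card {j \<in> J. \<mu> j = s} = card {j \<in> J. DA P j = s}"
proof (cases "s \<in> schools P")
  case True
  have finite_J: "finite J" using finite_students unfolding J_def by simp
  have "\<mu> ` J \<subseteq> schools P" "DA P ` J \<subseteq> schools P"
    using \<mu> DA_is_matching unfolding J_def is_matching_def by auto
  then have "(\<Sum>t \<in> schools P. card {j \<in> J. \<mu> j = t}) = (\<Sum>t \<in> schools P. card {j \<in> J. DA P j = t})"
    using sum_card_fibers[OF finite_J finite_schools] by simp
  from this[unfolded J_def] show ?thesis
    unfolding J_def
    by (rule sum_mono_inv[OF _ improved_fiber_card_le[OF \<mu> dom] True finite_schools])
next
  case False
  then have none: "{j \<in> J. \<mu> j = s} = {}" "{j \<in> J. DA P j = s} = {}"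
    using \<mu> DA_is_matching unfolding J_def is_matching_def by auto
  show ?thesis unfolding none by simp
qed

lemma envy_permutation_of_improvement:
  assumes \<mu>: "is_matching P \<mu>" and dom: "weakly_dominates P \<mu> (DA P)"
  obtains \<sigma> where "\<sigma> permutes {j \<in> students P. \<mu> j \<noteq> DA P j}"
    "\<And>j. j \<in> {j \<in> students P. \<mu> j \<noteq> DA P j} \<Longrightarrow> envies P j (\<sigma> j)"
proof -
  let ?J = "{j \<in> students P. \<mu> j \<noteq> DA P j}"
  obtain \<sigma> where \<sigma>: "\<sigma> permutes ?J" and moves: "\<And>j. j \<in> ?J \<Longrightarrow> DA P (\<sigma> j) = \<mu> j"
    using permutes_matching_fibers[of ?J \<mu> "DA P"] improved_fiber_card_eq[OF \<mu> dom] finite_students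
    by auto
  have "envies P j (\<sigma> j)" if j: "j \<in> ?J" for j
  proof -
    have "\<sigma> j \<in> ?J" using permutes_in_image[OF \<sigma>] j by blast
    moreover have "(\<mu> j, DA P j) \<in> pref P j"
      using dom j unfolding weakly_dominates_def weakly_prefers_def by auto
    ultimately show ?thesis using j moves[OF j] unfolding envies_def by simp
  qed
  with \<sigma> show thesis by (rule that)
qed

lemma not_unimprovable_if_on_envy_cycle:
  assumes "on_envy_cycle P i"
  shows "\<not> unimprovable P i"
proof -
  obtain J \<sigma> where "finite J" "i \<in> J" "\<sigma> permutes J" "\<And>j. j \<in> J \<Longrightarrow> envies P j (\<sigma> j)"
    using envy_permutation_of_cycle[OF assms] by blast
  then show ?thesis by (rule not_unimprovable_if_envy_permutation)
qed

lemma on_envy_cycle_if_improved: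
  assumes \<mu>: "is_matching P \<mu>" and dom: "weakly_dominates P \<mu> (DA P)"
    and i: "i \<in> students P" and improved: "\<mu> i \<noteq> DA P i"
  shows "on_envy_cycle P i"
proof -
  let ?J = "{j \<in> students P. \<mu> j \<noteq> DA P j}"
  obtain \<sigma> where "\<sigma> permutes ?J" "\<And>j. j \<in> ?J \<Longrightarrow> envies P j (\<sigma> j)"
    using envy_permutation_of_improvement[OF \<mu> dom] by blast
  moreover have "i \<in> ?J" using i improved by simp
  ultimately show ?thesis using finite_students by (intro on_envy_cycle_of_permutation) auto
qed

end

theorem proposition1:
  fixes P :: "('i, 's) problem" and i :: 'i
  assumes "school_choice P" and "i \<in> students P"
  shows "unimprovable P i \<longleftrightarrow> \<not> on_envy_cycle P i"
proof -
  interpret school_choice_problem P by (rule school_choice_problem.intro) fact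
  have "unimprovable P i" if "\<not> on_envy_cycle P i"
    using that on_envy_cycle_if_improved assms(2)
    unfolding unimprovable_def M_set_def pareto_efficient_def by blast
  then show ?thesis using not_unimprovable_if_on_envy_cycle by blast
qed

end
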